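(* For any $n$-agent rank-based mechanism with allocation rule $x$ and any $\delta<1/n$: (1) $\sup_{q<\delta}x'(q)\le e\,x'(\delta)$, and (2) $\sup_{q>1-\delta}x'(q)\le e\,x'(1-\delta)$.
   Context: For $k\in\{1,\dots,n-1\}$ the $k$-highest-bids-win allocation rule in quantile space is $x_k(q)=\sum_{i=0}^{k-1}\binom{n-1}{i}q^{n-1-i}(1-q)^i$, with derivative $x_k'(q)=(n-1)\binom{n-2}{k-1}q^{n-k-1}(1-q)^{k-1}$; $x_0\equiv 0$, $x_n\equiv 1$. A rank-based mechanism with position weights $1\ge w_1\ge\cdots\ge w_n\ge 0$ ($w_{n+1}:=0$) has allocation rule $x(q)=\sum_{k=1}^{n}(w_k-w_{k+1})x_k(q)$, $q\in[0,1]$. *)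

theory Defs
  imports "HOL-Analysis.Analysis"
begin

text \<open>k-highest-bids-win allocation rule in quantile space (n agents):
  x_k(q) = sum_{i=0}^{k-1} (n-1 choose i) q^(n-1-i) (1-q)^i.
  In particular x_0 = 0 and x_n = 1.\<close>
definition khw_alloc :: "nat \<Rightarrow> nat \<Rightarrow> real \<Rightarrow> real" where
  "khw_alloc n k q = (\<Sum>i<k. real ((n - 1) choose i) * q ^ (n - 1 - i) * (1 - q) ^ i)"

text \<open>Position weights w_1 \<ge> ... \<ge> w_n, in [0,1], with w_{n+1} := 0.\<close>
definition rank_weights :: "nat \<Rightarrow> (nat \<Rightarrow> real) \<Rightarrow> bool" where
  "rank_weights n w \<longleftrightarrow> w 1 \<le> 1 \<and> (\<forall>k. 1 \<le> k \<and> k < n \<longrightarrow> w (Suc k) \<le> w k) \<and> 0 \<le> w n"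

definition rank_alloc :: "nat \<Rightarrow> (nat \<Rightarrow> real) \<Rightarrow> real \<Rightarrow> real" where
  "rank_alloc n w q = (\<Sum>k=1..n. (w k - (if k = n then 0 else w (Suc k))) * khw_alloc n k q)"

end

theory Submission
  imports Defs
begin

text \<open>Every derivative x_k' is a nonnegative multiple of q^(n-1-k) (1-q)^(k-1), and x' is a
  nonnegative combination of these. On [0,\<delta>] the factor q^(n-1-k) is largest at \<delta>, while
  (1-q)^(k-1) can exceed its value at \<delta> by at most the factor (1-\<delta>)^(1-n) \<le> e, because
  n\<delta> < 1. The interval [1-\<delta>,1] is symmetric under q \<mapsto> 1-q.\<close>

definition khw_alloc_deriv :: "nat \<Rightarrow> nat \<Rightarrow> real \<Rightarrow> real" where
  "khw_alloc_deriv n k q =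
     (if k = 0 then 0
      else real (n - 1) * real ((n - 2) choose (k - 1)) * q ^ (n - 1 - k) * (1 - q) ^ (k - 1))"

lemma has_real_derivative_khw_alloc:
  assumes "k \<le> n"
  shows "(khw_alloc n k has_real_derivative khw_alloc_deriv n k q) (at q)"
  using assms
proof (induction k)
  case 0
  then show ?case by (simp add: khw_alloc_def khw_alloc_deriv_def)
next
  case (Suc k)
  define m where "m = n - 1"
  define step where
    "step = real (m choose k) * (real (m - k) * q ^ (m - k - 1) * (1 - q) ^ k
                                 - real k * q ^ (m - k) * (1 - q) ^ (k - 1))"
  have "khw_alloc n (Suc k) = (\<lambda>q. khw_alloc n k q + real (m choose k) * (q ^ (m - k) * (1 - q) ^ k))"
    by (rule ext) (simp add: khw_alloc_def m_def)
  then have "(khw_alloc n (Suc k) has_real_derivative khw_alloc_deriv n k q + step) (at q)"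
    using Suc unfolding step_def
    by (auto intro!: derivative_eq_intros simp: algebra_simps)
  moreover have "khw_alloc_deriv n (Suc k) q = khw_alloc_deriv n k q + step"
  proof (cases k)
    case 0
    then show ?thesis by (simp add: khw_alloc_deriv_def step_def m_def)
  next
    case (Suc j)
    \<comment> \<open>the telescoping rests on (m-k) C(m,k) = m C(m-1,k) and k C(m,k) = m C(m-1,k-1)\<close>
    have absorb_comp: "real (m - k) * real (m choose k) = real m * real ((m - 1) choose k)"
      using binomial_absorb_comp[of m k] by (metis of_nat_mult)
    have absorb: "real k * real (m choose k) = real m * real ((m - 1) choose j)"
      using times_binomial_minus1_eq[of k m] Suc by (metis diff_Suc_1 of_nat_mult zero_less_Suc)
    have "n - 2 = m - 1" using m_def by simp
    then have "khw_alloc_deriv n (Suc k) q - khw_alloc_deriv n k q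
        = real m * real ((m - 1) choose k) * q ^ (m - k - 1) * (1 - q) ^ k
          - real m * real ((m - 1) choose j) * q ^ (m - k) * (1 - q) ^ j"
      by (simp add: khw_alloc_deriv_def m_def Suc)
    also have "\<dots> = step"
      unfolding step_def absorb_comp [symmetric] absorb [symmetric] using Suc
      by (simp add: algebra_simps)
    finally show ?thesis by simp
  qed
  ultimately show ?case by simp
qed

lemma deriv_rank_alloc:
  "deriv (rank_alloc n w) q
     = (\<Sum>k=1..n. (w k - (if k = n then 0 else w (Suc k))) * khw_alloc_deriv n k q)"
proof (rule DERIV_imp_deriv)
  show "(rank_alloc n w has_real_derivative
          (\<Sum>k=1..n. (w k - (if k = n then 0 else w (Suc k))) * khw_alloc_deriv n k q)) (at q)"
    unfolding rank_alloc_def [abs_def]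
    by (auto intro!: derivative_eq_intros has_real_derivative_khw_alloc simp: mult.commute)
qed

text \<open>From 1 + y \<le> e^y with y = d/(1-d): (1-d)^(-j) \<le> e^(jd/(1-d)) \<le> e.\<close>
lemma one_le_exp_one_mult_power_one_minus:
  fixes d :: real
  assumes "0 \<le> d" and "real (Suc j) * d < 1"
  shows "1 \<le> exp 1 * (1 - d) ^ j"
proof -
  have "d \<le> real (Suc j) * d"
    using assms by (simp add: algebra_simps)
  then have d_less_1: "d < 1"
    using assms by linarith
  define y where "y = d / (1 - d)"
  have "1 / (1 - d) = 1 + y"
    using d_less_1 by (simp add: y_def field_simps)
  also have "\<dots> \<le> exp y"
    by (rule exp_ge_add_one_self)
  finally have "1 \<le> (1 - d) * exp y"
    using d_less_1 by (simp add: field_simps)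
  then have "1 \<le> ((1 - d) * exp y) ^ j"
    by (simp add: one_le_power)
  also have "\<dots> = (1 - d) ^ j * exp (real j * y)"
    by (simp add: power_mult_distrib exp_of_nat_mult)
  also have "\<dots> \<le> (1 - d) ^ j * exp 1"
  proof -
    have "real j * y \<le> 1"
      using assms d_less_1 by (simp add: y_def field_simps)
    then show ?thesis
      using d_less_1 by (intro mult_left_mono) auto
  qed
  finally show ?thesis by (simp add: mult.commute)
qed

lemma power_mult_power_one_minus_le_left:
  fixes q d :: real
  assumes "0 \<le> q" and "q \<le> d" and "real (Suc b) * d < 1"
  shows "q ^ a * (1 - q) ^ b \<le> exp 1 * (d ^ a * (1 - d) ^ b)"
proof -
  have "d \<le> real (Suc b) * d"
    using assms by (simp add: algebra_simps)
  then have "d < 1"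
    using assms by linarith
  have "(1 - q) ^ b \<le> 1"
    using assms \<open>d < 1\<close> by (intro power_le_one) auto
  also have "\<dots> \<le> exp 1 * (1 - d) ^ b"
    using assms by (intro one_le_exp_one_mult_power_one_minus) auto
  finally have "q ^ a * (1 - q) ^ b \<le> d ^ a * (exp 1 * (1 - d) ^ b)"
    using assms \<open>d < 1\<close> by (intro mult_mono power_mono) auto
  then show ?thesis by (simp add: algebra_simps)
qed

lemma power_mult_power_one_minus_le_right:
  fixes q d :: real
  assumes "1 - d \<le> q" and "q \<le> 1" and "real (Suc a) * d < 1"
  shows "q ^ a * (1 - q) ^ b \<le> exp 1 * ((1 - d) ^ a * d ^ b)"
  using power_mult_power_one_minus_le_left[of "1 - q" d a b] assms
  by (simp add: mult.commute)

lemma khw_alloc_deriv_le_left: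
  assumes "0 \<le> q" and "q \<le> d" and "k \<le> n" and "real n * d < 1"
  shows "khw_alloc_deriv n k q \<le> exp 1 * khw_alloc_deriv n k d"
proof (cases "k = 0")
  case False
  have "real (Suc (k - 1)) * d \<le> real n * d"
    using assms False by (intro mult_right_mono) auto
  then have "q ^ (n - 1 - k) * (1 - q) ^ (k - 1) \<le> exp 1 * (d ^ (n - 1 - k) * (1 - d) ^ (k - 1))"
    (is "_ \<le> exp 1 * ?rhs")
    using assms by (intro power_mult_power_one_minus_le_left) auto
  then have "real (n - 1) * real ((n - 2) choose (k - 1)) * (q ^ (n - 1 - k) * (1 - q) ^ (k - 1))
      \<le> real (n - 1) * real ((n - 2) choose (k - 1)) * (exp 1 * ?rhs)"
    by (intro mult_left_mono) auto
  then show ?thesis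
    using False by (simp add: khw_alloc_deriv_def algebra_simps)
qed (simp add: khw_alloc_deriv_def)

lemma khw_alloc_deriv_le_right:
  assumes "1 - d \<le> q" and "q \<le> 1" and "0 \<le> d" and "k \<le> n" and "real n * d < 1"
  shows "khw_alloc_deriv n k q \<le> exp 1 * khw_alloc_deriv n k (1 - d)"
proof (cases "k = 0")
  case False
  have "real (Suc (n - 1 - k)) * d \<le> real n * d"
    using assms False by (intro mult_right_mono) auto
  then have "q ^ (n - 1 - k) * (1 - q) ^ (k - 1) \<le> exp 1 * ((1 - d) ^ (n - 1 - k) * d ^ (k - 1))"
    (is "_ \<le> exp 1 * ?rhs")
    using assms by (intro power_mult_power_one_minus_le_right) auto
  then have "real (n - 1) * real ((n - 2) choose (k - 1)) * (q ^ (n - 1 - k) * (1 - q) ^ (k - 1))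
      \<le> real (n - 1) * real ((n - 2) choose (k - 1)) * (exp 1 * ?rhs)"
    by (intro mult_left_mono) auto
  then show ?thesis
    using False by (simp add: khw_alloc_deriv_def algebra_simps)
qed (simp add: khw_alloc_deriv_def)

lemma deriv_rank_alloc_le:
  assumes "rank_weights n w"
    and "\<And>k. 1 \<le> k \<Longrightarrow> k \<le> n \<Longrightarrow> khw_alloc_deriv n k q \<le> c * khw_alloc_deriv n k p"
  shows "deriv (rank_alloc n w) q \<le> c * deriv (rank_alloc n w) p"
proof -
  have "0 \<le> w k - (if k = n then 0 else w (Suc k))" if "k \<in> {1..n}" for k
    using assms(1) that unfolding rank_weights_def by auto
  then have "(\<Sum>k=1..n. (w k - (if k = n then 0 else w (Suc k))) * khw_alloc_deriv n k q)
      \<le> (\<Sum>k=1..n. (w k - (if k = n then 0 else w (Suc k))) * (c * khw_alloc_deriv n k p))"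
    using assms(2) by (intro sum_mono mult_left_mono) auto
  also have "\<dots> = c * (\<Sum>k=1..n. (w k - (if k = n then 0 else w (Suc k))) * khw_alloc_deriv n k p)"
    by (simp add: sum_distrib_left algebra_simps)
  finally show ?thesis by (simp add: deriv_rank_alloc)
qed

theorem mainTheorem7:
  fixes n :: nat and w :: "nat \<Rightarrow> real" and \<delta> :: real
  assumes "n \<ge> 1"
    and "rank_weights n w"
    and "0 < \<delta>" and "\<delta> < 1 / real n"
  shows "(SUP q\<in>{0..<\<delta>}. deriv (rank_alloc n w) q) \<le> exp 1 * deriv (rank_alloc n w) \<delta>
       \<and> (SUP q\<in>{1 - \<delta><..1}. deriv (rank_alloc n w) q) \<le> exp 1 * deriv (rank_alloc n w) (1 - \<delta>)"
proof
  have n\<delta>: "real n * \<delta> < 1"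
    using assms by (simp add: field_simps)
  show "(SUP q\<in>{0..<\<delta>}. deriv (rank_alloc n w) q) \<le> exp 1 * deriv (rank_alloc n w) \<delta>"
    using assms(2,3) n\<delta>
    by (intro cSUP_least deriv_rank_alloc_le khw_alloc_deriv_le_left) auto
  show "(SUP q\<in>{1 - \<delta><..1}. deriv (rank_alloc n w) q) \<le> exp 1 * deriv (rank_alloc n w) (1 - \<delta>)"
    using assms(2,3) n\<delta>
    by (intro cSUP_least deriv_rank_alloc_le khw_alloc_deriv_le_right) auto
qed

end
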